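(* Let $\lambda\in\mathbb C$ be a root of $\chi(\lambda)=\prod_{k=1}^{m-1}(\lambda+k)-m!$ with $\Re(\lambda)>-\frac12$, and let $C\in\mathbb C$. Then the smoothing transformation $K$ maps $\mathcal M_2(C)$ into itself.
   Context: $m\ge2$ is an integer. $T=\tau_{(1)}+\dots+\tau_{(m-1)}$ where the $\tau_{(j)}$ are independent and $\tau_{(j)}$ is exponential with parameter $j$ (so $T$ has density $(m-1)e^{-u}(1-e^{-u})^{m-2}$ on $\mathbb R_+$). For $C\in\mathbb C$, $\mathcal M_2(C)$ is the set of probability distributions on $\mathbb C$ with finite second absolute moment and expectation $C$. For a probability measure $\mu$ on $\mathbb C$, $K\mu$ is the law of $e^{-\lambda T}(Z^{(1)}+\dots+Z^{(m)})$, where $Z^{(1)},\dots,Z^{(m)}$ are independent with law $\mu$ and independent of $T$. *)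

theory Defs
  imports "HOL-Probability.Probability"
begin

text \<open>Law of T = tau_1 + ... + tau_(m-1) (independent exponentials with
parameters 1..m-1), given by its density (m-1) e^{-u} (1-e^{-u})^{m-2} on R_+.\<close>
definition T_law :: "nat \<Rightarrow> real measure" where
  "T_law m = density lborel
     (\<lambda>u. ennreal (indicator {0..} u * (real m - 1) * exp (- u) * (1 - exp (- u)) ^ (m - 2)))"

definition chi :: "nat \<Rightarrow> complex \<Rightarrow> complex" where
  "chi m l = (\<Prod>k=1..m-1. l + of_nat k) - of_nat (fact m)"

definition M2 :: "complex \<Rightarrow> complex measure set" where
  "M2 C = {\<mu>. prob_space \<mu> \<and> sets \<mu> = sets borel \<and>
              integrable \<mu> (\<lambda>z. (cmod z)\<^sup>2) \<and> integrable \<mu> (\<lambda>z. z) \<and>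
              (\<integral>z. z \<partial>\<mu>) = C}"

definition K :: "nat \<Rightarrow> complex \<Rightarrow> complex measure \<Rightarrow> complex measure" where
  "K m l \<mu> = distr (T_law m \<Otimes>\<^sub>M (\<Pi>\<^sub>M i\<in>{..<m}. \<mu>)) borel
     (\<lambda>(t, z). exp (- (l * complex_of_real t)) * (\<Sum>i<m. z i))"

end

theory Submission
  imports Defs
begin

text \<open>Expanding \<open>(1 - exp (-u))^(m-2)\<close> binomially and summing the resulting partial
  fractions gives the Laplace transform \<open>E exp (-\<lambda>T) = (m-1)! / \<Prod>k=1..m-1. (\<lambda> + k)\<close>
  for \<open>Re \<lambda> > -1\<close>. As \<open>T\<close> is independent of the \<open>Z\<^sub>i\<close>, the mean of \<open>K \<mu>\<close> factorises as
  \<open>E exp (-\<lambda>T) \<cdot> m C\<close>, which is \<open>C\<close> precisely because \<open>\<chi>(\<lambda>) = 0\<close>; the second moment is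
  at most \<open>E exp (-2 Re \<lambda> T) \<cdot> m \<Sum>i. E |Z\<^sub>i|^2\<close>, finite since \<open>2 Re \<lambda> > -1\<close>.\<close>

lemma tendsto_exp_neg_mult_at_top:
  fixes a :: complex assumes a: "Re a > 0"
  shows "((\<lambda>t::real. exp (- (a * of_real t))) \<longlongrightarrow> 0) at_top"
proof (rule tendsto_norm_zero_cancel)
  have "((\<lambda>t::real. exp (- (t * Re a))) \<longlongrightarrow> 0) at_top"
    using a by (auto intro!: exp_at_bot[THEN filterlim_compose] filterlim_tendsto_pos_mult_at_top
        filterlim_ident simp: filterlim_uminus_at_bot mult.commute[of _ "Re a"])
  then show "((\<lambda>t::real. norm (exp (- (a * of_real t)))) \<longlongrightarrow> 0) at_top"
    by (simp add: norm_exp_eq_Re mult.commute)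
qed

lemma
  fixes a :: complex assumes a: "Re a > 0"
  shows set_integrable_exp_neg_Ioi:
      "set_integrable lborel {0<..} (\<lambda>u::real. exp (- (a * of_real u)))"
    and set_integral_exp_neg_Ioi: "(LBINT u:{0<..}. exp (- (a * of_real u))) = 1 / a"
proof -
  show si: "set_integrable lborel {0<..} (\<lambda>u::real. exp (- (a * of_real u)))"
    unfolding set_integrable_def
  proof (rule Bochner_Integration.integrable_bound)
    show "integrable lborel (\<lambda>x::real. indicator {0<..} x *\<^sub>R exp (-(x * Re a)))"
      using integrable_I0i_exp_mscale[OF a] by (simp add: set_integrable_def)
    show "AE x in lborel. norm (indicator {0<..} x *\<^sub>R exp (- (a * complex_of_real x)))
         \<le> norm (indicator {0<..} x *\<^sub>R exp (- (x * Re a)))"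
      by (auto simp: indicator_def norm_exp_eq_Re mult.commute)
  qed measurable
  have a0: "a \<noteq> 0" using a by auto
  let ?F = "\<lambda>u::real. - exp (- (a * of_real u)) / a"
  have "(LBINT u=0..\<infinity>. exp (- (a * of_real u))) = 0 - (- 1 / a)"
  proof (rule interval_integral_FTC_integrable)
    fix x :: real
    have "((\<lambda>z. - exp (- (a * z)) / a) has_field_derivative exp (- (a * of_real x))) (at (of_real x))"
      using a0 by (auto intro!: derivative_eq_intros simp: field_simps)
    then show "(?F has_vector_derivative exp (- (a * of_real x))) (at x)"
      by (rule has_vector_derivative_real_field)
    show "isCont (\<lambda>u::real. exp (- (a * of_real u))) x" by (intro continuous_intros)
  next
    show "set_integrable lborel (einterval 0 \<infinity>) (\<lambda>u::real. exp (- (a * of_real u)))"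
      using si by (simp add: zero_ereal_def einterval_def greaterThan_def)
    show "((?F \<circ> real_of_ereal) \<longlongrightarrow> - 1 / a) (at_right 0)"
      using a0 by (auto simp: zero_ereal_def ereal_tendsto_simps intro!: tendsto_eq_intros)
    show "((?F \<circ> real_of_ereal) \<longlongrightarrow> 0) (at_left \<infinity>)"
      unfolding ereal_tendsto_simps
      using tendsto_divide[OF tendsto_minus[OF tendsto_exp_neg_mult_at_top[OF a]] tendsto_const[of a]] a0
      by simp
  qed simp
  then show "(LBINT u:{0<..}. exp (- (a * of_real u))) = 1 / a"
    by (simp add: interval_lebesgue_integral_0_infty)
qed

lemma has_bochner_integral_exp_neg:
  fixes a :: complex assumes a: "Re a > 0"
  shows "has_bochner_integral lborel
           (\<lambda>u::real. indicator {0..} u *\<^sub>R exp (- (a * of_real u))) (1 / a)"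
proof -
  have h: "has_bochner_integral lborel
      (\<lambda>u::real. indicator {0<..} u *\<^sub>R exp (- (a * of_real u))) (1 / a)"
    using set_integrable_exp_neg_Ioi[OF a] set_integral_exp_neg_Ioi[OF a]
    by (simp add: has_bochner_integral_iff set_integrable_def set_lebesgue_integral_def)
  then show ?thesis
    using AE_lborel_singleton[of 0]
    by (intro has_bochner_integral_cong_AE[THEN iffD1, OF _ _ _ h])
       (auto split: split_indicator)
qed

definition alt_binomial_sum :: "nat \<Rightarrow> 'a::field_char_0 \<Rightarrow> 'a" where
  "alt_binomial_sum n x = (\<Sum>j\<le>n. of_nat (n choose j) * (-1)^j / (x + of_nat j))"

lemma alt_binomial_sum_shift:
  assumes "k \<le> Suc n"
  shows "alt_binomial_sum k x =
    1 / x + (\<Sum>j\<le>n. of_nat (k choose Suc j) * (-1)^Suc j / (x + 1 + of_nat j))"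
proof -
  have "alt_binomial_sum k x = (\<Sum>j\<le>Suc n. of_nat (k choose j) * (-1)^j / (x + of_nat j))"
    unfolding alt_binomial_sum_def using assms by (intro sum.mono_neutral_left) auto
  also have "\<dots> = 1 / x + (\<Sum>j\<le>n. of_nat (k choose Suc j) * (-1)^Suc j / (x + 1 + of_nat j))"
    by (subst sum.atMost_Suc_shift) (simp del: sum.atMost_Suc add: add_ac)
  finally show ?thesis .
qed

lemma alt_binomial_sum_Suc:
  "alt_binomial_sum (Suc n) x = alt_binomial_sum n x - alt_binomial_sum n (x + 1)"
proof -
  have "alt_binomial_sum (Suc n) x - alt_binomial_sum n x = - alt_binomial_sum n (x + 1)"
    unfolding alt_binomial_sum_shift[of "Suc n" n x, OF order_refl]
      alt_binomial_sum_shift[of n n x, OF le_SucI[OF order_refl]] alt_binomial_sum_def[of n "x + 1"]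
    by (simp del: sum.atMost_Suc add: binomial_Suc_Suc sum_subtractf[symmetric] sum_negf[symmetric]
        ring_distribs add_divide_distrib diff_divide_distrib)
  then show ?thesis by (simp add: algebra_simps)
qed

lemma alt_binomial_sum_eq:
  fixes x :: "'a::field_char_0"
  assumes "\<And>j. x + of_nat j \<noteq> 0"
  shows "alt_binomial_sum n x = fact n / (\<Prod>j\<le>n. x + of_nat j)"
  using assms
proof (induction n arbitrary: x)
  case 0
  then show ?case by (simp add: alt_binomial_sum_def)
next
  case (Suc n)
  define P where "P = (\<Prod>j\<le>n. x + 1 + of_nat j)"
  define Q where "Q = (\<Prod>j\<le>n. x + of_nat j)"
  have x1: "\<And>j. x + 1 + of_nat j \<noteq> 0" using Suc.prems by (metis add.assoc of_nat_Suc)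
  have prod_Suc: "(\<Prod>j\<le>Suc n. x + of_nat j) = x * P"
    unfolding P_def by (subst prod.atMost_Suc_shift) (simp del: prod.atMost_Suc add: add_ac)
  have prod_Suc': "(\<Prod>j\<le>Suc n. x + of_nat j) = Q * (x + of_nat (Suc n))"
    unfolding Q_def by simp
  have "x \<noteq> 0" "P \<noteq> 0" "Q \<noteq> 0"
    using Suc.prems[of 0] Suc.prems x1 unfolding P_def Q_def by auto
  then have "fact n / Q - fact n / P = fact n * (x * P - x * Q) / (x * P * Q)"
    by (simp add: field_simps)
  also have "x * P - x * Q = of_nat (Suc n) * Q"
    using prod_Suc prod_Suc' by (simp add: algebra_simps)
  also have "fact n * (of_nat (Suc n) * Q) / (x * P * Q) = fact (Suc n) / (x * P)"
    using \<open>Q \<noteq> 0\<close> by simp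
  finally have "fact n / Q - fact n / P = fact (Suc n) / (x * P)" .
  then show ?case
    using Suc.IH[OF Suc.prems] Suc.IH[OF x1] prod_Suc
    by (simp del: prod.atMost_Suc add: alt_binomial_sum_Suc P_def Q_def)
qed

definition T_density :: "nat \<Rightarrow> real \<Rightarrow> real" where
  "T_density m u = indicator {0..} u * (real m - 1) * exp (- u) * (1 - exp (- u)) ^ (m - 2)"

lemma T_law_eq_density: "T_law m = density lborel (\<lambda>u. ennreal (T_density m u))"
  unfolding T_law_def T_density_def ..

lemma T_density_nonneg: "m \<ge> 2 \<Longrightarrow> 0 \<le> T_density m u"
  unfolding T_density_def by (auto simp: indicator_def)

lemma borel_measurable_T_density[measurable]: "T_density m \<in> borel_measurable borel"
  unfolding T_density_def by measurable

lemma sets_T_law[simp, measurable_cong]: "sets (T_law m) = sets borel"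
  by (simp add: T_law_def)

lemma T_density_exp_expansion:
  fixes l :: complex
  shows "T_density (Suc (Suc n)) u *\<^sub>R exp (- (l * of_real u)) =
    (\<Sum>j\<le>n. of_nat (Suc n) * of_nat (n choose j) * (-1)^j *
       (indicator {0..} u *\<^sub>R exp (- ((l + 1 + of_nat j) * of_real u))))"
proof (cases "u \<ge> 0")
  case False
  then show ?thesis by (simp add: T_density_def)
next
  case True
  define E where "E = exp (- (of_real u :: complex))"
  have exp_j: "exp (- ((l + 1 + of_nat j) * of_real u)) = exp (- (l * of_real u)) * E * E ^ j" for j
    unfolding E_def exp_of_nat_mult[symmetric] exp_add[symmetric] by (simp add: algebra_simps)
  have "T_density (Suc (Suc n)) u *\<^sub>R exp (- (l * of_real u)) =
      of_nat (Suc n) * E * (1 - E) ^ n * exp (- (l * of_real u))"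
    using True by (simp add: T_density_def E_def scaleR_conv_of_real flip: exp_of_real)
  also have "\<dots> = (\<Sum>j\<le>n. of_nat (Suc n) * of_nat (n choose j) * (-1)^j *
       (exp (- (l * of_real u)) * E * E ^ j))"
    unfolding binomial_ring[of "- E" 1 n, simplified] sum_distrib_left sum_distrib_right
    by (intro sum.cong refl) (simp add: power_minus[of E] ac_simps)
  finally show ?thesis using True by (simp add: exp_j)
qed

lemma has_bochner_integral_T_density_exp:
  fixes l :: complex
  assumes m: "m \<ge> 2" and l: "Re l > -1"
  shows "has_bochner_integral lborel (\<lambda>u. T_density m u *\<^sub>R exp (- (l * of_real u)))
           (fact (m - 1) / (\<Prod>k=1..m-1. l + of_nat k))"
proof -
  obtain n where mn: "m = Suc (Suc n)" using m by (metis add_2_eq_Suc le_Suc_ex)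
  have l1: "(l + 1) + of_nat j \<noteq> 0" for j
  proof -
    have "Re ((l + 1) + of_nat j) > 0" using l by simp
    then show ?thesis by (metis zero_complex.sel(1) less_irrefl)
  qed
  have "has_bochner_integral lborel (\<lambda>u. T_density m u *\<^sub>R exp (- (l * of_real u)))
      (\<Sum>j\<le>n. of_nat (Suc n) * of_nat (n choose j) * (-1)^j * (1 / (l + 1 + of_nat j)))"
    unfolding mn T_density_exp_expansion
    by (intro has_bochner_integral_sum has_bochner_integral_mult_right has_bochner_integral_exp_neg)
      (use l in simp)
  also have "(\<Sum>j\<le>n. of_nat (Suc n) * of_nat (n choose j) * (-1)^j * (1 / (l + 1 + of_nat j)))
      = of_nat (Suc n) * alt_binomial_sum n (l + 1)"
    unfolding alt_binomial_sum_def sum_distrib_left by (intro sum.cong refl) simp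
  also have "\<dots> = of_nat (Suc n) * (fact n / (\<Prod>j\<le>n. (l + 1) + of_nat j))"
    using alt_binomial_sum_eq[OF l1] by simp
  also have "(\<Prod>j\<le>n. (l + 1) + of_nat j) = (\<Prod>k=1..m-1. l + of_nat k)"
    unfolding mn atMost_atLeast0 using prod.shift_bounds_cl_Suc_ivl[of "\<lambda>k. l + of_nat k" 0 n]
    by (simp add: add_ac)
  also have "of_nat (Suc n) * (fact n / (\<Prod>k=1..m-1. l + of_nat k)) =
      fact (m - 1) / (\<Prod>k=1..m-1. l + of_nat k)"
    by (simp add: mn fact_Suc)
  finally show ?thesis .
qed

lemma prob_space_T_law:
  assumes m: "m \<ge> 2" shows "prob_space (T_law m)"
proof
  have "has_bochner_integral lborel (\<lambda>u. T_density m u *\<^sub>R exp (- ((0::complex) * of_real u)))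
           (fact (m - 1) / (\<Prod>k=1..m-1. (0::complex) + of_nat k))"
    using has_bochner_integral_T_density_exp[OF m, of 0] by simp
  moreover have "(\<Prod>k=1..m-1. (0::complex) + of_nat k) = fact (m - 1)"
    by (simp add: fact_prod)
  ultimately have "has_bochner_integral lborel (\<lambda>u. complex_of_real (T_density m u)) 1"
    by (simp add: scaleR_conv_of_real)
  from has_bochner_integral_Re[OF this]
  have h: "has_bochner_integral lborel (T_density m) 1" by (simp add: o_def)
  have "emeasure (T_law m) (space (T_law m)) = (\<integral>\<^sup>+u. ennreal (T_density m u) \<partial>lborel)"
    by (simp add: T_law_eq_density emeasure_density)
  also have "\<dots> = ennreal 1"
    using h T_density_nonneg[OF m]
    by (subst nn_integral_eq_integral) (auto simp: has_bochner_integral_iff)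
  finally show "emeasure (T_law m) (space (T_law m)) = 1" by simp
qed

lemma integrable_T_law_iff:
  fixes F :: "real \<Rightarrow> 'b::{banach, second_countable_topology}"
  assumes m: "m \<ge> 2" and [measurable]: "F \<in> borel_measurable borel"
  shows "integrable (T_law m) F \<longleftrightarrow> integrable lborel (\<lambda>u. T_density m u *\<^sub>R F u)"
  unfolding T_law_eq_density using T_density_nonneg[OF m]
  by (subst integrable_density) auto

lemma integral_T_law:
  fixes F :: "real \<Rightarrow> 'b::{banach, second_countable_topology}"
  assumes m: "m \<ge> 2" and [measurable]: "F \<in> borel_measurable borel"
  shows "integral\<^sup>L (T_law m) F = integral\<^sup>L lborel (\<lambda>u. T_density m u *\<^sub>R F u)"
  unfolding T_law_eq_density using T_density_nonneg[OF m]
  by (subst integral_density) auto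

lemma
  fixes l :: complex
  assumes m: "m \<ge> 2" and l: "Re l > -1"
  shows integrable_T_law_exp: "integrable (T_law m) (\<lambda>u. exp (- (l * of_real u)))"
    and integral_T_law_exp: "integral\<^sup>L (T_law m) (\<lambda>u. exp (- (l * of_real u))) =
           fact (m - 1) / (\<Prod>k=1..m-1. l + of_nat k)"
  using has_bochner_integral_T_density_exp[OF m l]
  by (auto simp: integrable_T_law_iff[OF m] integral_T_law[OF m] has_bochner_integral_iff)

lemma integrable_T_law_exp_real:
  fixes a :: real
  assumes m: "m \<ge> 2" and a: "a > -1"
  shows "integrable (T_law m) (\<lambda>u. exp (- (a * u)))"
proof -
  have "integrable (T_law m) (\<lambda>u. exp (- (complex_of_real a * of_real u)))"
    using integrable_T_law_exp[OF m, of "of_real a"] a by simp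
  from integrable_Re[OF this] show ?thesis
    by (simp flip: of_real_mult of_real_minus add: exp_of_real)
qed

lemma
  fixes f :: "'a \<Rightarrow> 'c::{real_normed_field, banach, second_countable_topology}" and g :: "'b \<Rightarrow> 'c"
  assumes NA: "prob_space NA" and NB: "prob_space NB"
    and f: "integrable NA f" and g: "integrable NB g"
  shows integrable_product_mult: "integrable (NA \<Otimes>\<^sub>M NB) (\<lambda>(x,y). f x * g y)"
    and integral_product_mult:
      "integral\<^sup>L (NA \<Otimes>\<^sub>M NB) (\<lambda>(x,y). f x * g y) = integral\<^sup>L NA f * integral\<^sup>L NB g"
proof -
  interpret Q1: prob_space NA by fact
  interpret Q2: prob_space NB by fact
  interpret pair_sigma_finite NA NB ..
  have [measurable]: "f \<in> borel_measurable NA" "g \<in> borel_measurable NB"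
    using f g by auto
  show int: "integrable (NA \<Otimes>\<^sub>M NB) (\<lambda>(x,y). f x * g y)"
  proof (rule Fubini_integrable)
    show "(\<lambda>(x,y). f x * g y) \<in> borel_measurable (NA \<Otimes>\<^sub>M NB)" by measurable
    have "integrable NA (\<lambda>x. norm (f x) * (\<integral>y. norm (g y) \<partial>NB))"
      using f by (intro integrable_mult_left) auto
    then show "integrable NA (\<lambda>x. \<integral>y. norm (case (x, y) of (x, y) \<Rightarrow> f x * g y) \<partial>NB)"
      by (simp add: norm_mult)
    show "AE x in NA. integrable NB (\<lambda>y. case (x, y) of (x, y) \<Rightarrow> f x * g y)"
      using g by simp
  qed
  have "integral\<^sup>L (NA \<Otimes>\<^sub>M NB) (\<lambda>(x,y). f x * g y) = (\<integral>x. (\<integral>y. f x * g y \<partial>NB) \<partial>NA)"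
    using integral_fst[of "\<lambda>x y. f x * g y"] int by simp
  also have "\<dots> = integral\<^sup>L NA f * integral\<^sup>L NB g"
    by (simp add: integral_mult_left)
  finally show "integral\<^sup>L (NA \<Otimes>\<^sub>M NB) (\<lambda>(x,y). f x * g y) = integral\<^sup>L NA f * integral\<^sup>L NB g" .
qed

lemma
  fixes h :: "'a \<Rightarrow> 'c::{banach, second_countable_topology}"
  assumes mu: "prob_space \<mu>" and i: "i \<in> I" and h: "integrable \<mu> h"
  shows integrable_PiM_component: "integrable (PiM I (\<lambda>_. \<mu>)) (\<lambda>\<omega>. h (\<omega> i))"
    and integral_PiM_component:
      "integral\<^sup>L (PiM I (\<lambda>_. \<mu>)) (\<lambda>\<omega>. h (\<omega> i)) = integral\<^sup>L \<mu> h"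
proof -
  have [measurable]: "h \<in> borel_measurable \<mu>" using h by auto
  have d: "distr (PiM I (\<lambda>_. \<mu>)) \<mu> (\<lambda>\<omega>. \<omega> i) = \<mu>"
    using distr_PiM_component[of I "\<lambda>_. \<mu>" i] mu i by simp
  have m: "(\<lambda>\<omega>. \<omega> i) \<in> measurable (PiM I (\<lambda>_. \<mu>)) \<mu>" using i by measurable
  show "integrable (PiM I (\<lambda>_. \<mu>)) (\<lambda>\<omega>. h (\<omega> i))"
    using integrable_distr_eq[OF m, of h] h d by simp
  show "integral\<^sup>L (PiM I (\<lambda>_. \<mu>)) (\<lambda>\<omega>. h (\<omega> i)) = integral\<^sup>L \<mu> h"
    using integral_distr[OF m, of h] d by simp
qed

lemma sum_iid_moments:
  fixes n :: nat
  assumes mu: "\<mu> \<in> M2 C"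
  defines "P \<equiv> PiM {..<n} (\<lambda>_. \<mu>)"
  shows "integrable P (\<lambda>z. \<Sum>i<n. z i)"
    and "(\<integral>z. (\<Sum>i<n. z i) \<partial>P) = of_nat n * C"
    and "integrable P (\<lambda>z. (cmod (\<Sum>i<n. z i))\<^sup>2)"
proof -
  from mu have p: "prob_space \<mu>" and [measurable_cong]: "sets \<mu> = sets borel"
    and i1: "integrable \<mu> (\<lambda>z. z)" and i2: "integrable \<mu> (\<lambda>z. (cmod z)\<^sup>2)"
    and e1: "(\<integral>z. z \<partial>\<mu>) = C"
    by (auto simp: M2_def)
  have comp: "integrable P (\<lambda>z. z i)" "(\<integral>z. z i \<partial>P) = C"
    and comp2: "integrable P (\<lambda>z. (cmod (z i))\<^sup>2)" if "i < n" for i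
    using integrable_PiM_component[OF p _ i1, of i "{..<n}"]
      integral_PiM_component[OF p _ i1, of i "{..<n}"]
      integrable_PiM_component[OF p _ i2, of i "{..<n}"] that e1
    by (auto simp: P_def)
  show "integrable P (\<lambda>z. \<Sum>i<n. z i)" using comp by auto
  show "(\<integral>z. (\<Sum>i<n. z i) \<partial>P) = of_nat n * C"
    using comp by (simp add: Bochner_Integration.integral_sum)
  show "integrable P (\<lambda>z. (cmod (\<Sum>i<n. z i))\<^sup>2)"
  proof (rule Bochner_Integration.integrable_bound)
    show "integrable P (\<lambda>z. real n * (\<Sum>i<n. (cmod (z i))\<^sup>2))"
      using comp2 by (intro integrable_mult_right integrable_sum) auto
    show "(\<lambda>z. (cmod (\<Sum>i<n. z i))\<^sup>2) \<in> borel_measurable P"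
      unfolding P_def by measurable
    show "AE z in P. norm ((cmod (\<Sum>i<n. z i))\<^sup>2) \<le> norm (real n * (\<Sum>i<n. (cmod (z i))\<^sup>2))"
    proof (intro AE_I2)
      fix z :: "nat \<Rightarrow> complex"
      have "(cmod (\<Sum>i<n. z i))\<^sup>2 \<le> (\<Sum>i<n. cmod (z i))\<^sup>2"
        by (intro power_mono norm_sum) auto
      also have "\<dots> \<le> (\<Sum>i<n. (cmod (z i))\<^sup>2) * card {..<n}"
        by (rule sum_squared_le_sum_of_squares)
      finally show "norm ((cmod (\<Sum>i<n. z i))\<^sup>2) \<le> norm (real n * (\<Sum>i<n. (cmod (z i))\<^sup>2))"
        by (simp add: mult.commute sum_nonneg)
    qed
  qed
qed

lemma K_in_M2:
  assumes m: "m \<ge> 2" and l: "Re l > - 1/2" and mu: "\<mu> \<in> M2 C"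
  shows "K m l \<mu> \<in> M2 (fact (m - 1) / (\<Prod>k=1..m-1. l + of_nat k) * (of_nat m * C))"
proof -
  define P where "P = PiM {..<m} (\<lambda>_. \<mu>)"
  define \<Phi> where "\<Phi> = (\<lambda>(t, z). exp (- (l * complex_of_real t)) * (\<Sum>i<m. z i))"
  have [measurable_cong]: "sets \<mu> = sets borel" using mu by (simp add: M2_def)
  have pT: "prob_space (T_law m)" using prob_space_T_law[OF m] .
  have pP: "prob_space P"
    unfolding P_def using mu by (intro prob_space_PiM) (auto simp: M2_def)
  have K_eq: "K m l \<mu> = distr (T_law m \<Otimes>\<^sub>M P) borel \<Phi>"
    unfolding K_def P_def \<Phi>_def ..
  have \<Phi>_measurable[measurable]: "\<Phi> \<in> borel_measurable (T_law m \<Otimes>\<^sub>M P)"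
    unfolding \<Phi>_def P_def by measurable
  note S = sum_iid_moments[OF mu, of m, folded P_def]
  have \<Phi>_integrable: "integrable (T_law m \<Otimes>\<^sub>M P) \<Phi>"
    unfolding \<Phi>_def using l
    by (intro integrable_product_mult[OF pT pP integrable_T_law_exp[OF m] S(1)]) simp
  have "integrable (T_law m \<Otimes>\<^sub>M P)
      (\<lambda>(t, z). exp (- ((2 * Re l) * t)) * (cmod (\<Sum>i<m. z i))\<^sup>2)"
    using l by (intro integrable_product_mult[OF pT pP integrable_T_law_exp_real[OF m] S(3)]) simp
  moreover have "(\<lambda>x. (cmod (\<Phi> x))\<^sup>2) =
      (\<lambda>(t, z). exp (- ((2 * Re l) * t)) * (cmod (\<Sum>i<m. z i))\<^sup>2)"
    by (auto simp: \<Phi>_def norm_mult power_mult_distrib norm_exp_eq_Re exp_double[symmetric]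
        algebra_simps)
  ultimately have \<Phi>_square_integrable: "integrable (T_law m \<Otimes>\<^sub>M P) (\<lambda>x. (cmod (\<Phi> x))\<^sup>2)"
    by simp
  have "(\<integral>z. z \<partial>K m l \<mu>) = (\<integral>x. \<Phi> x \<partial>(T_law m \<Otimes>\<^sub>M P))"
    unfolding K_eq by (subst integral_distr) auto
  also have "\<dots> = fact (m - 1) / (\<Prod>k=1..m-1. l + of_nat k) * (of_nat m * C)"
    unfolding \<Phi>_def using l
    by (simp add: integral_product_mult[OF pT pP integrable_T_law_exp[OF m] S(1)]
        integral_T_law_exp[OF m] S(2))
  finally show ?thesis
    unfolding M2_def K_eq
    using prob_space.prob_space_distr[OF prob_space_pair[OF pT pP] \<Phi>_measurable] \<Phi>_integrable \<Phi>_square_integrable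
    by (auto simp: integrable_distr_eq)
qed

theorem lemma6p1:
  fixes m :: nat and l C :: complex
  assumes "m \<ge> 2"
    and "chi m l = 0"
    and "Re l > - 1/2"
  shows "\<forall>\<mu>\<in>M2 C. K m l \<mu> \<in> M2 C"
proof
  fix \<mu> assume "\<mu> \<in> M2 C"
  have "(\<Prod>k=1..m-1. l + of_nat k) = fact m"
    using assms(2) by (simp add: chi_def)
  moreover have "fact (m - 1) / fact m * of_nat m = (1 :: complex)"
    using assms(1) by (simp add: fact_reduce[of m])
  ultimately show "K m l \<mu> \<in> M2 C"
    using K_in_M2[OF assms(1,3) \<open>\<mu> \<in> M2 C\<close>] by (simp add: mult.assoc[symmetric])
qed

end
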